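(* Let $(A,A^* )$ be a left-symmetric bialgebroid. Then for all $x\in\Gamma(A)$, $\xi\in\Gamma(A^* )$ and $f\in C^\infty(M)$, $$x\cdot_A d_*f=d_*\big(a_A(x)(f)\big)-(\delta_*x)\llcorner_{df},\qquad \xi\cdot_{A^*}df=d\big(a_{A^*}(\xi)(f)\big)-(\delta\xi)\llcorner_{d_*f}.$$
   Context: A left-symmetric algebroid is a vector bundle $A\to M$ with an $\mathbb R$-bilinear multiplication $\cdot_A$ on $\Gamma(A)$ with $x\cdot_A(y\cdot_Az)-(x\cdot_Ay)\cdot_Az$ symmetric in $x,y$, and an anchor $a_A:A\to TM$ with $x\cdot_A(fy)=f(x\cdot_Ay)+a_A(x)(f)y$, $(fx)\cdot_Ay=f(x\cdot_Ay)$; $[x,y]_A=x\cdot_Ay-y\cdot_Ax$; $d$ is the differential of the Lie algebroid $(A,[\cdot,\cdot]_A,a_A)$ ($\langle df,x\rangle=a_A(x)f$). The coboundary $\delta:C^n(A)\to C^{n+1}(A)$, $C^{n+1}(A)=\Gamma(\wedge^nA^*\otimes A^* )$, is $\delta\varphi(x_1,\dots,x_{n+1})=\sum_{i=1}^n(-1)^{i+1}a_A(x_i)\varphi(\dots,\hat{x_i},\dots,x_{n+1})-\sum_{i=1}^n(-1)^{i+1}\varphi(\dots,\hat{x_i},\dots,x_n,x_i\cdot_Ax_{n+1})+\sum_{i<j\le n}(-1)^{i+j}\varphi([x_i,x_j]_A,\dots,\hat{x_i},\dots,\hat{x_j},\dots,x_{n+1})$; in particular for $\xi\in\Gamma(A^*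 )$, $\delta\xi(x,y)=a_A(x)\langle\xi,y\rangle-\langle\xi,x\cdot_Ay\rangle$. The Lie derivative $\mathfrak L_x$ on $\Gamma(A\otimes A)$ is $\mathfrak L_x(y_1\otimes y_2)=(x\cdot_Ay_1)\otimes y_2+y_1\otimes[x,y_2]_A$. Given left-symmetric algebroids $(A,\cdot_A,a_A)$ and $(A^*,\cdot_{A^*},a_{A^*})$ on dual bundles, the dual-side objects $[\cdot,\cdot]_{A^*}$, $d_*$ (with values in $\Gamma(A)$, $\langle d_*f,\xi\rangle=a_{A^*}(\xi)f$), $\delta_*$ (acting on $\Gamma(\wedge^nA\otimes A)$) and $\mathfrak L_\xi$ (on $\Gamma(A^*\otimes A^* )$) are defined by the same formulas with the roles of $A$ and $A^*$ exchanged. The pair $(A,A^* )$ is a left-symmetric bialgebroid if for all $x,y\in\Gamma(A)$, $\xi,\eta\in\Gamma(A^* )$: $\delta[\xi,\eta]_{A^*}=\mathfrak L_\xi\delta\eta-\mathfrak L_\eta\delta\xi$ and $\delta_*[x,y]_A=\mathfrak L_x\delta_*y-\mathfrak L_y\delta_*x$. For $\Phi$ a section of $A\otimes A$ (resp. $A^*\otimes A^*$), $\Phi\llcorner_\alpha$ denotes contraction in the second slot: $(\Phi\llcorner_\alpha)(\beta)=\Phi(\beta,\alpha)$. *)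

theory Defs
  imports Main "HOL.Real_Vector_Spaces"
begin

text \<open>Algebraic (Serre--Swan) model of a pair of dual vector bundles over a manifold M:
  'r plays the role of C^infinity(M) (a commutative real algebra), 'a the module of
  sections of A, 'b the module of sections of A*, and P the duality pairing.
  Sections of A (x) A are represented as the C^infinity(M)-bilinear forms on
  sections of A*, and sections of A* (x) A* as bilinear forms on sections of A.
  Vector fields are the R-linear derivations of C^infinity(M).\<close>

definition is_module :: "('r::comm_ring_1 \<Rightarrow> 'a::ab_group_add \<Rightarrow> 'a) \<Rightarrow> bool" where
  "is_module sm \<longleftrightarrow>
     (\<forall>f g y. sm (f * g) y = sm f (sm g y)) \<and> (\<forall>y. sm 1 y = y) \<and>
     (\<forall>f g y. sm (f + g) y = sm f y + sm g y) \<and> (\<forall>f y z. sm f (y + z) = sm f y + sm f z)"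

text \<open>Duality pairing of finitely generated projective modules (sections of dual
  vector bundles): bilinear, with a finite dual basis in both directions.\<close>
definition dual_pair ::
  "('r::{comm_ring_1,real_algebra_1} \<Rightarrow> 'a::ab_group_add \<Rightarrow> 'a) \<Rightarrow> ('r \<Rightarrow> 'b::ab_group_add \<Rightarrow> 'b)
     \<Rightarrow> ('a \<Rightarrow> 'b \<Rightarrow> 'r) \<Rightarrow> bool" where
  "dual_pair smA smB P \<longleftrightarrow> is_module smA \<and> is_module smB \<and>
     (\<forall>f x \<xi>. P (smA f x) \<xi> = f * P x \<xi>) \<and> (\<forall>f x \<xi>. P x (smB f \<xi>) = f * P x \<xi>) \<and>
     (\<forall>x y \<xi>. P (x + y) \<xi> = P x \<xi> + P y \<xi>) \<and> (\<forall>x \<xi> \<eta>. P x (\<xi> + \<eta>) = P x \<xi> + P x \<eta>) \<and>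
     (\<exists>es :: ('a \<times> 'b) list.
        (\<forall>y. y = (\<Sum>(e,\<epsilon>)\<leftarrow>es. smA (P y \<epsilon>) e)) \<and>
        (\<forall>\<xi>. \<xi> = (\<Sum>(e,\<epsilon>)\<leftarrow>es. smB (P e \<xi>) \<epsilon>)))"

definition is_vector_field :: "('r::{comm_ring_1,real_algebra_1} \<Rightarrow> 'r) \<Rightarrow> bool" where
  "is_vector_field X \<longleftrightarrow>
     (\<forall>g h. X (g + h) = X g + X h) \<and> (\<forall>c g. X (of_real c * g) = of_real c * X g) \<and>
     (\<forall>g h. X (g * h) = g * X h + h * X g)"

definition brk :: "('a \<Rightarrow> 'a \<Rightarrow> 'a::ab_group_add) \<Rightarrow> 'a \<Rightarrow> 'a \<Rightarrow> 'a" where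
  "brk mul x y = mul x y - mul y x"

definition left_symmetric_algebroid ::
  "('r::{comm_ring_1,real_algebra_1} \<Rightarrow> 'a::ab_group_add \<Rightarrow> 'a) \<Rightarrow> ('a \<Rightarrow> 'a \<Rightarrow> 'a) \<Rightarrow> ('a \<Rightarrow> 'r \<Rightarrow> 'r) \<Rightarrow> bool" where
  "left_symmetric_algebroid sm mul an \<longleftrightarrow>
     (\<forall>x y z. mul (x + y) z = mul x z + mul y z) \<and>
     (\<forall>x y z. mul x (y + z) = mul x y + mul x z) \<and>
     (\<forall>c x y. mul (sm (of_real c) x) y = sm (of_real c) (mul x y)) \<and>
     (\<forall>c x y. mul x (sm (of_real c) y) = sm (of_real c) (mul x y)) \<and>
     (\<forall>x y z. mul x (mul y z) - mul (mul x y) z = mul y (mul x z) - mul (mul y x) z) \<and>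
     (\<forall>f x y. mul x (sm f y) = sm f (mul x y) + sm (an x f) y) \<and>
     (\<forall>f x y. mul (sm f x) y = sm f (mul x y)) \<and>
     (\<forall>x. is_vector_field (an x)) \<and>
     (\<forall>f x g. an (sm f x) g = f * an x g) \<and>
     (\<forall>x y g. an (x + y) g = an x g + an y g)"

definition diff :: "('e \<Rightarrow> 'f \<Rightarrow> 'r) \<Rightarrow> ('e \<Rightarrow> 'r \<Rightarrow> 'r) \<Rightarrow> 'r \<Rightarrow> 'f" where
  "diff P an f = (THE \<xi>. \<forall>x. P x \<xi> = an x f)"

definition cob1 :: "('e \<Rightarrow> 'f \<Rightarrow> 'r::comm_ring_1) \<Rightarrow> ('e \<Rightarrow> 'e \<Rightarrow> 'e) \<Rightarrow> ('e \<Rightarrow> 'r \<Rightarrow> 'r) \<Rightarrow> 'f \<Rightarrow> 'e \<Rightarrow> 'e \<Rightarrow> 'r" where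
  "cob1 P mul an \<xi> = (\<lambda>x y. an x (P y \<xi>) - P (mul x y) \<xi>)"

definition contr :: "('e \<Rightarrow> 'f \<Rightarrow> 'r) \<Rightarrow> ('e \<Rightarrow> 'e \<Rightarrow> 'r) \<Rightarrow> 'e \<Rightarrow> 'f" where
  "contr P \<Phi> \<alpha> = (THE \<xi>. \<forall>\<beta>. P \<beta> \<xi> = \<Phi> \<beta> \<alpha>)"

text \<open>Finite sum of decomposable tensors y1 (x) y2 in sections of E (x) E,
  as a bilinear form on sections of E*.\<close>
definition tsum :: "('e \<Rightarrow> 'f \<Rightarrow> 'r::comm_ring_1) \<Rightarrow> ('e \<times> 'e) list \<Rightarrow> 'f \<Rightarrow> 'f \<Rightarrow> 'r" where
  "tsum P ys = (\<lambda>\<xi> \<eta>. \<Sum>(y1,y2)\<leftarrow>ys. P y1 \<xi> * P y2 \<eta>)"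

definition lie :: "('e \<Rightarrow> 'f \<Rightarrow> 'r::comm_ring_1) \<Rightarrow> ('e \<Rightarrow> 'e \<Rightarrow> 'e::ab_group_add) \<Rightarrow> 'e
     \<Rightarrow> ('f \<Rightarrow> 'f \<Rightarrow> 'r) \<Rightarrow> 'f \<Rightarrow> 'f \<Rightarrow> 'r" where
  "lie P mul x \<Phi> = (THE \<Psi>. \<forall>ys. \<Phi> = tsum P ys \<longrightarrow>
      \<Psi> = tsum P (map (\<lambda>(y1,y2). (mul x y1, y2)) ys @ map (\<lambda>(y1,y2). (y1, brk mul x y2)) ys))"

definition flipP :: "('a \<Rightarrow> 'b \<Rightarrow> 'r) \<Rightarrow> 'b \<Rightarrow> 'a \<Rightarrow> 'r" where
  "flipP P = (\<lambda>\<xi> x. P x \<xi>)"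

definition left_symmetric_bialgebroid ::
  "('r::{comm_ring_1,real_algebra_1} \<Rightarrow> 'a::ab_group_add \<Rightarrow> 'a) \<Rightarrow> ('r \<Rightarrow> 'b::ab_group_add \<Rightarrow> 'b)
    \<Rightarrow> ('a \<Rightarrow> 'b \<Rightarrow> 'r) \<Rightarrow> ('a \<Rightarrow> 'a \<Rightarrow> 'a) \<Rightarrow> ('a \<Rightarrow> 'r \<Rightarrow> 'r)
    \<Rightarrow> ('b \<Rightarrow> 'b \<Rightarrow> 'b) \<Rightarrow> ('b \<Rightarrow> 'r \<Rightarrow> 'r) \<Rightarrow> bool" where
  "left_symmetric_bialgebroid smA smB P mulA anA mulB anB \<longleftrightarrow>
     dual_pair smA smB P \<and>
     left_symmetric_algebroid smA mulA anA \<and>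
     left_symmetric_algebroid smB mulB anB \<and>
     (\<forall>\<xi> \<eta>. cob1 P mulA anA (brk mulB \<xi> \<eta>) =
        lie (flipP P) mulB \<xi> (cob1 P mulA anA \<eta>) - lie (flipP P) mulB \<eta> (cob1 P mulA anA \<xi>)) \<and>
     (\<forall>x y. cob1 (flipP P) mulB anB (brk mulA x y) =
        lie P mulA x (cob1 (flipP P) mulB anB y) - lie P mulA y (cob1 (flipP P) mulB anB x))"

end

theory Submission
  imports Defs
begin

text \<open>Pairing with a test section turns each identity into the symmetry
  \<open>\<langle>x \<cdot>\<^sub>A d\<^sub>*f, \<xi>\<rangle> = \<langle>x, \<xi> \<cdot>\<^sub>A\<^sub>* df\<rangle>\<close>. To prove it, compare the compatibility condition
  \<open>\<delta>\<^sub>*[x,y]\<^sub>A = \<L>\<^sub>x \<delta>\<^sub>*y - \<L>\<^sub>y \<delta>\<^sub>*x\<close> at \<open>y\<close> and at \<open>fy\<close>. Writing the Lie derivative of a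
  tensor through the dual representations \<open>\<L>\<^sup>*\<^sub>x\<close> and \<open>ad\<^sup>*\<^sub>x\<close>, every term is
  \<open>C\<^sup>\<infinity>(M)\<close>-linear in \<open>y\<close> except for a defect \<open>\<langle>y,\<eta>\<rangle>\<close> times the difference of the two sides
  of the symmetry; hence that difference is annihilated by every pairing value, so it vanishes.\<close>

lemma flipP_apply [simp]: "flipP P \<xi> x = P x \<xi>"
  by (simp add: flipP_def)

lemma flipP_flipP [simp]: "flipP (flipP P) = P"
  by (simp add: flipP_def)

lemma sum_list_map_additive:
  fixes g :: "'x::ab_group_add \<Rightarrow> 'y::ab_group_add"
  assumes "\<And>a b. g (a + b) = g a + g b"
  shows "g (\<Sum>x\<leftarrow>xs. h x) = (\<Sum>x\<leftarrow>xs. g (h x))"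
proof -
  have "g 0 = 0" using assms[of 0 0] by simp
  then show ?thesis by (induct xs) (simp_all add: assms)
qed

lemma sum_list_concat: "sum_list (concat xss) = (\<Sum>xs\<leftarrow>xss. sum_list (xs::'x::monoid_add list))"
  by (induct xss) simp_all

definition linear_form :: "('r::comm_ring_1 \<Rightarrow> 'a \<Rightarrow> 'a) \<Rightarrow> ('a::ab_group_add \<Rightarrow> 'r) \<Rightarrow> bool" where
  "linear_form sm L \<longleftrightarrow> (\<forall>a b. L (a + b) = L a + L b) \<and> (\<forall>h a. L (sm h a) = h * L a)"

lemma linear_formI [intro?]:
  "(\<And>a b. L (a + b) = L a + L b) \<Longrightarrow> (\<And>h a. L (sm h a) = h * L a) \<Longrightarrow> linear_form sm L"
  by (simp add: linear_form_def)

lemma linear_form_add: "linear_form sm L \<Longrightarrow> L (a + b) = L a + L b"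
  by (simp add: linear_form_def)

lemma linear_form_smult: "linear_form sm L \<Longrightarrow> L (sm h a) = h * L a"
  by (simp add: linear_form_def)

lemma dual_pair_flip:
  fixes sA :: "'r::{comm_ring_1,real_algebra_1} \<Rightarrow> 'a::ab_group_add \<Rightarrow> 'a"
    and sB :: "'r \<Rightarrow> 'b::ab_group_add \<Rightarrow> 'b" and P :: "'a \<Rightarrow> 'b \<Rightarrow> 'r"
  assumes "dual_pair sA sB P"
  shows "dual_pair sB sA (flipP P)"
proof -
  obtain es :: "('a \<times> 'b) list"
    where "\<forall>y. y = (\<Sum>(e,\<epsilon>)\<leftarrow>es. sA (P y \<epsilon>) e)" and "\<forall>\<xi>. \<xi> = (\<Sum>(e,\<epsilon>)\<leftarrow>es. sB (P e \<xi>) \<epsilon>)"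
    using assms unfolding dual_pair_def by blast
  moreover have "(\<Sum>(\<epsilon>,e)\<leftarrow>map prod.swap es. sA (flipP P \<epsilon> y) e) = (\<Sum>(e,\<epsilon>)\<leftarrow>es. sA (P y \<epsilon>) e)"
    and "(\<Sum>(\<epsilon>,e)\<leftarrow>map prod.swap es. sB (flipP P \<xi> e) \<epsilon>) = (\<Sum>(e,\<epsilon>)\<leftarrow>es. sB (P e \<xi>) \<epsilon>)"
    for y \<xi> by (simp_all add: o_def split_def)
  ultimately have "\<exists>es :: ('b \<times> 'a) list. (\<forall>\<xi>. \<xi> = (\<Sum>(\<epsilon>,e)\<leftarrow>es. sB (flipP P \<xi> e) \<epsilon>))
      \<and> (\<forall>y. y = (\<Sum>(\<epsilon>,e)\<leftarrow>es. sA (flipP P \<epsilon> y) e))"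
    by (intro exI[of _ "map prod.swap es"]) metis
  then show ?thesis
    using assms unfolding dual_pair_def flipP_apply by blast
qed

locale dual_pairing =
  fixes sA :: "'r::{comm_ring_1,real_algebra_1} \<Rightarrow> 'a::ab_group_add \<Rightarrow> 'a"
    and sB :: "'r \<Rightarrow> 'b::ab_group_add \<Rightarrow> 'b"
    and P :: "'a \<Rightarrow> 'b \<Rightarrow> 'r"
  assumes dual_pair: "dual_pair sA sB P"
begin

lemma pair_smult_left [simp]: "P (sA f x) \<xi> = f * P x \<xi>"
  and pair_smult_right [simp]: "P x (sB f \<xi>) = f * P x \<xi>"
  and pair_add_left [simp]: "P (x + y) \<xi> = P x \<xi> + P y \<xi>"
  and pair_add_right [simp]: "P x (\<xi> + \<eta>) = P x \<xi> + P x \<eta>"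
  using dual_pair unfolding dual_pair_def by blast+

lemma pair_diff_left [simp]: "P (x - y) \<xi> = P x \<xi> - P y \<xi>"
  using pair_add_left[of "x - y" y \<xi>] by (simp add: algebra_simps)

lemma pair_diff_right [simp]: "P x (\<xi> - \<eta>) = P x \<xi> - P x \<eta>"
  using pair_add_right[of x "\<xi> - \<eta>" \<eta>] by (simp add: algebra_simps)

lemma dual_basis:
  obtains es :: "('a \<times> 'b) list"
  where "\<And>y. y = (\<Sum>(e,\<epsilon>)\<leftarrow>es. sA (P y \<epsilon>) e)" and "\<And>\<xi>. \<xi> = (\<Sum>(e,\<epsilon>)\<leftarrow>es. sB (P e \<xi>) \<epsilon>)"
  using dual_pair unfolding dual_pair_def by blast

lemma basis_expansion:
  assumes basis: "\<And>y. y = (\<Sum>(e,\<epsilon>)\<leftarrow>es. sA (P y \<epsilon>) e)" and L: "linear_form sA L"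
  shows "L y = (\<Sum>(e,\<epsilon>)\<leftarrow>es. P y \<epsilon> * L e)"
proof -
  have "L y = L (\<Sum>(e,\<epsilon>)\<leftarrow>es. sA (P y \<epsilon>) e)" by (rule arg_cong[OF basis])
  also have "\<dots> = (\<Sum>(e,\<epsilon>)\<leftarrow>es. L (sA (P y \<epsilon>) e))"
    by (subst sum_list_map_additive[OF linear_form_add[OF L]]) (simp add: split_def)
  also have "\<dots> = (\<Sum>(e,\<epsilon>)\<leftarrow>es. P y \<epsilon> * L e)"
    by (simp add: split_def linear_form_smult[OF L])
  finally show ?thesis .
qed

lemma pair_right_eqI:
  assumes "\<And>z. P z \<xi> = P z \<eta>"
  shows "\<xi> = \<eta>"
proof -
  obtain es :: "('a \<times> 'b) list" where basis: "\<And>\<xi>. \<xi> = (\<Sum>(e,\<epsilon>)\<leftarrow>es. sB (P e \<xi>) \<epsilon>)"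
    using dual_basis by blast
  have "\<xi> = (\<Sum>(e,\<epsilon>)\<leftarrow>es. sB (P e \<xi>) \<epsilon>)" by (rule basis)
  also have "\<dots> = (\<Sum>(e,\<epsilon>)\<leftarrow>es. sB (P e \<eta>) \<epsilon>)" using assms by simp
  also have "\<dots> = \<eta>" by (rule basis[symmetric])
  finally show ?thesis .
qed

lemma linear_form_represented:
  assumes L: "linear_form sA L"
  shows "\<exists>!\<xi>. \<forall>z. P z \<xi> = L z"
proof -
  obtain es where basis: "\<And>y. y = (\<Sum>(e,\<epsilon>)\<leftarrow>es. sA (P y \<epsilon>) e)"
    using dual_basis by blast
  have "P z (\<Sum>(e,\<epsilon>)\<leftarrow>es. sB (L e) \<epsilon>) = L z" for z
  proof -
    have "P z (\<Sum>(e,\<epsilon>)\<leftarrow>es. sB (L e) \<epsilon>) = (\<Sum>(e,\<epsilon>)\<leftarrow>es. P z \<epsilon> * L e)"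
      by (subst sum_list_map_additive[where g = "P z"]) (simp_all add: split_def mult.commute)
    then show ?thesis using basis_expansion[OF basis L, of z] by simp
  qed
  then show ?thesis
    by (intro ex1I[of _ "\<Sum>(e,\<epsilon>)\<leftarrow>es. sB (L e) \<epsilon>"]) (auto intro: pair_right_eqI)
qed

lemma pair_The_represented:
  "linear_form sA L \<Longrightarrow> P z (THE \<xi>. \<forall>z. P z \<xi> = L z) = L z"
  using theI'[OF linear_form_represented] by blast

lemma pair_diff: "linear_form sA (\<lambda>x. an x f) \<Longrightarrow> P z (diff P an f) = an z f"
  unfolding diff_def by (rule pair_The_represented)

lemma pair_contr: "linear_form sA (\<lambda>\<beta>. \<Phi> \<beta> \<alpha>) \<Longrightarrow> P \<beta> (contr P \<Phi> \<alpha>) = \<Phi> \<beta> \<alpha>"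
  unfolding contr_def by (rule pair_The_represented)

lemma linear_form_eq_zeroI:
  assumes L: "linear_form sA L" and annihilated: "\<And>x y \<xi>. P y \<xi> * L x = 0"
  shows "L x = 0"
proof -
  obtain es where basis: "\<And>y. y = (\<Sum>(e,\<epsilon>)\<leftarrow>es. sA (P y \<epsilon>) e)"
    using dual_basis by blast
  show ?thesis using basis_expansion[OF basis L, of x] by (simp add: annihilated split_def)
qed

end

locale ls_algebroid =
  fixes sm :: "'r::{comm_ring_1,real_algebra_1} \<Rightarrow> 'a::ab_group_add \<Rightarrow> 'a"
    and mul :: "'a \<Rightarrow> 'a \<Rightarrow> 'a" and an :: "'a \<Rightarrow> 'r \<Rightarrow> 'r"
  assumes left_symmetric_algebroid: "left_symmetric_algebroid sm mul an"
begin

lemma mult_add_left: "mul (x + y) z = mul x z + mul y z"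
  and mult_add_right: "mul x (y + z) = mul x y + mul x z"
  and smult_mult: "mul (sm f x) y = sm f (mul x y)"
  and mult_smult: "mul x (sm f y) = sm f (mul x y) + sm (an x f) y"
  and anchor_smult: "an (sm f x) g = f * an x g"
  and anchor_add_left: "an (x + y) g = an x g + an y g"
  and anchor_vector_field: "is_vector_field (an x)"
  using left_symmetric_algebroid unfolding left_symmetric_algebroid_def by simp_all

lemma anchor_add: "an x (g + h) = an x g + an x h"
  and anchor_mult: "an x (g * h) = g * an x h + h * an x g"
  using anchor_vector_field unfolding is_vector_field_def by blast+

lemma anchor_zero: "an x 0 = 0"
  using anchor_add[of x 0 0] by simp

lemma anchor_diff: "an x (g - h) = an x g - an x h"
  using anchor_add[of x "g - h" h] by (simp add: algebra_simps)

lemma linear_form_anchor: "linear_form sm (\<lambda>x. an x f)"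
  by rule (simp_all add: anchor_add_left anchor_smult)

end

locale algebroid_duality = dual_pairing sA sB P + A: ls_algebroid sA mA aA + B: ls_algebroid sB mB aB
  for sA :: "'r::{comm_ring_1,real_algebra_1} \<Rightarrow> 'a::ab_group_add \<Rightarrow> 'a"
    and sB :: "'r \<Rightarrow> 'b::ab_group_add \<Rightarrow> 'b"
    and P :: "'a \<Rightarrow> 'b \<Rightarrow> 'r"
    and mA :: "'a \<Rightarrow> 'a \<Rightarrow> 'a" and aA :: "'a \<Rightarrow> 'r \<Rightarrow> 'r"
    and mB :: "'b \<Rightarrow> 'b \<Rightarrow> 'b" and aB :: "'b \<Rightarrow> 'r \<Rightarrow> 'r"

sublocale algebroid_duality \<subseteq> flipped: dual_pairing sB sA "flipP P"
  by unfold_locales (rule dual_pair_flip[OF dual_pair])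

lemma algebroid_duality_flip:
  "algebroid_duality sA sB P mA aA mB aB \<Longrightarrow> algebroid_duality sB sA (flipP P) mB aB mA aA"
  unfolding algebroid_duality_def dual_pairing_def ls_algebroid_def by (blast intro: dual_pair_flip)

context algebroid_duality
begin

definition dual_mult :: "'a \<Rightarrow> 'b \<Rightarrow> 'b" where
  "dual_mult x \<xi> = (THE \<eta>. \<forall>z. P z \<eta> = aA x (P z \<xi>) - P (mA x z) \<xi>)"

definition dual_ad :: "'a \<Rightarrow> 'b \<Rightarrow> 'b" where
  "dual_ad x \<xi> = (THE \<eta>. \<forall>z. P z \<eta> = aA x (P z \<xi>) - P (brk mA x z) \<xi>)"

lemma pair_brk_add_right: "P (brk mA x (y + z)) \<eta> = P (brk mA x y) \<eta> + P (brk mA x z) \<eta>"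
  by (simp add: brk_def A.mult_add_left A.mult_add_right)

lemma pair_brk_smult_right: "P (brk mA x (sA h z)) \<eta> = h * P (brk mA x z) \<eta> + aA x h * P z \<eta>"
  by (simp add: brk_def A.mult_smult A.smult_mult algebra_simps)

lemma pair_dual_mult: "P z (dual_mult x \<xi>) = aA x (P z \<xi>) - P (mA x z) \<xi>"
  unfolding dual_mult_def
  by (rule pair_The_represented, rule)
    (simp_all add: A.anchor_add A.anchor_mult A.mult_add_right A.mult_smult algebra_simps)

lemma pair_dual_ad: "P z (dual_ad x \<xi>) = aA x (P z \<xi>) - P (brk mA x z) \<xi>"
  unfolding dual_ad_def
  by (rule pair_The_represented, rule)
    (simp_all add: A.anchor_add A.anchor_mult pair_brk_add_right pair_brk_smult_right algebra_simps)

lemma dual_mult_smult: "dual_mult (sA f y) \<xi> = sB f (dual_mult y \<xi>)"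
  by (rule pair_right_eqI) (simp add: pair_dual_mult A.anchor_smult A.smult_mult algebra_simps)

lemma dual_ad_smult: "dual_ad (sA f y) \<eta> = sB f (dual_ad y \<eta>) + sB (P y \<eta>) (diff P aA f)"
  by (rule pair_right_eqI)
    (simp add: pair_dual_ad pair_diff[OF A.linear_form_anchor] brk_def A.mult_smult A.smult_mult
      A.anchor_smult algebra_simps)

lemma tsum_lie_transform:
  "tsum P (map (\<lambda>(y1,y2). (mA x y1, y2)) ys @ map (\<lambda>(y1,y2). (y1, brk mA x y2)) ys) \<xi> \<eta>
    = aA x (tsum P ys \<xi> \<eta>) - tsum P ys (dual_mult x \<xi>) \<eta> - tsum P ys \<xi> (dual_ad x \<eta>)"
  by (induct ys)
    (auto simp: tsum_def pair_dual_mult pair_dual_ad A.anchor_add A.anchor_mult A.anchor_zero algebra_simps)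

lemma bilinear_form_eq_tsum:
  assumes left: "\<And>\<eta>. linear_form sB (\<lambda>\<xi>. \<Phi> \<xi> \<eta>)" and right: "\<And>\<xi>. linear_form sB (\<Phi> \<xi>)"
  shows "\<exists>ys. \<Phi> = tsum P ys"
proof -
  obtain es :: "('b \<times> 'a) list" where basis: "\<And>\<xi>. \<xi> = (\<Sum>(\<epsilon>,e)\<leftarrow>es. sB (flipP P \<xi> e) \<epsilon>)"
    using flipped.dual_basis by blast
  have expand: "L \<xi> = (\<Sum>(\<epsilon>,e)\<leftarrow>es. P e \<xi> * L \<epsilon>)" if "linear_form sB L" for L \<xi>
    using flipped.basis_expansion[OF basis that, of \<xi>] by simp
  define ys where "ys = concat (map (\<lambda>(\<epsilon>,e). map (\<lambda>(\<epsilon>',e'). (sA (\<Phi> \<epsilon> \<epsilon>') e, e')) es) es)"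
  have "\<Phi> \<xi> \<eta> = tsum P ys \<xi> \<eta>" for \<xi> \<eta>
  proof -
    have "\<Phi> \<xi> \<eta> = (\<Sum>(\<epsilon>,e)\<leftarrow>es. P e \<xi> * \<Phi> \<epsilon> \<eta>)"
      by (rule expand[OF left])
    also have "\<dots> = (\<Sum>(\<epsilon>,e)\<leftarrow>es. P e \<xi> * (\<Sum>(\<epsilon>',e')\<leftarrow>es. P e' \<eta> * \<Phi> \<epsilon> \<epsilon>'))"
      by (subst expand[OF right]) (rule refl)
    also have "\<dots> = tsum P ys \<xi> \<eta>"
      unfolding ys_def tsum_def
      by (simp add: map_concat sum_list_concat o_def split_def sum_list_const_mult[symmetric] mult_ac)
    finally show ?thesis .
  qed
  then show ?thesis by blast
qed

lemma lie_bilinear_form: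
  assumes left: "\<And>\<eta>. linear_form sB (\<lambda>\<xi>. \<Phi> \<xi> \<eta>)" and right: "\<And>\<xi>. linear_form sB (\<Phi> \<xi>)"
  shows "lie P mA x \<Phi> = (\<lambda>\<xi> \<eta>. aA x (\<Phi> \<xi> \<eta>) - \<Phi> (dual_mult x \<xi>) \<eta> - \<Phi> \<xi> (dual_ad x \<eta>))"
    (is "_ = ?L")
proof -
  have step: "?L = tsum P (map (\<lambda>(y1,y2). (mA x y1, y2)) ys @ map (\<lambda>(y1,y2). (y1, brk mA x y2)) ys)"
    if "\<Phi> = tsum P ys" for ys
    using that by (simp add: tsum_lie_transform fun_eq_iff)
  obtain ys where "\<Phi> = tsum P ys" using bilinear_form_eq_tsum[OF left right] by blast
  then show ?thesis
    unfolding lie_def using step by (intro the_equality) auto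
qed

lemma cob1_flip_apply: "cob1 (flipP P) mB aB y \<xi> \<eta> = aB \<xi> (P y \<eta>) - P y (mB \<xi> \<eta>)"
  by (simp add: cob1_def)

lemma linear_form_cob1_left: "linear_form sB (\<lambda>\<xi>. cob1 (flipP P) mB aB y \<xi> \<eta>)"
  by rule (simp_all add: cob1_flip_apply B.anchor_add_left B.anchor_smult B.mult_add_left B.smult_mult
      algebra_simps)

lemma linear_form_cob1_right: "linear_form sB (cob1 (flipP P) mB aB y \<xi>)"
  by rule (simp_all add: cob1_flip_apply B.anchor_add B.anchor_mult B.mult_add_right B.mult_smult
      algebra_simps)

lemma lie_cob1:
  "lie P mA x (cob1 (flipP P) mB aB y) = (\<lambda>\<xi> \<eta>. aA x (cob1 (flipP P) mB aB y \<xi> \<eta>)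
    - cob1 (flipP P) mB aB y (dual_mult x \<xi>) \<eta> - cob1 (flipP P) mB aB y \<xi> (dual_ad x \<eta>))"
  by (rule lie_bilinear_form[OF linear_form_cob1_left linear_form_cob1_right])

lemma pair_diff_flip: "P (diff (flipP P) aB f) \<xi> = aB \<xi> f"
  using flipped.pair_diff[OF B.linear_form_anchor] by simp

lemma anchor_dual_mult: "aB (dual_mult x \<xi>) f = aA x (aB \<xi> f) - P (mA x (diff (flipP P) aB f)) \<xi>"
  using pair_dual_mult[of "diff (flipP P) aB f" x \<xi>] by (simp add: pair_diff_flip)

definition compat_defect :: "'a \<Rightarrow> 'a \<Rightarrow> 'b \<Rightarrow> 'b \<Rightarrow> 'r" where
  "compat_defect x y = cob1 (flipP P) mB aB (brk mA x y)
     - (lie P mA x (cob1 (flipP P) mB aB y) - lie P mA y (cob1 (flipP P) mB aB x))"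

lemma compat_defect_smult_right:
  "compat_defect x (sA f y) \<xi> \<eta> = f * compat_defect x y \<xi> \<eta>
     + P y \<eta> * (P x (mB \<xi> (diff P aA f)) - P (mA x (diff (flipP P) aB f)) \<xi>)"
  by (simp add: compat_defect_def lie_cob1 cob1_flip_apply pair_brk_smult_right pair_dual_ad
      dual_mult_smult dual_ad_smult anchor_dual_mult pair_diff[OF A.linear_form_anchor]
      A.anchor_smult A.anchor_add A.anchor_mult A.anchor_diff
      B.anchor_smult B.anchor_add B.anchor_mult B.anchor_diff B.mult_add_right B.mult_smult B.smult_mult
      algebra_simps)

lemma pair_mult_diff_symmetric:
  assumes compat: "\<And>x y. cob1 (flipP P) mB aB (brk mA x y)
      = lie P mA x (cob1 (flipP P) mB aB y) - lie P mA y (cob1 (flipP P) mB aB x)"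
  shows "P (mA x (diff (flipP P) aB f)) \<xi> = P x (mB \<xi> (diff P aA f))"
proof -
  let ?K = "\<lambda>x. P x (mB \<xi> (diff P aA f)) - P (mA x (diff (flipP P) aB f)) \<xi>"
  have "compat_defect x y \<xi> \<eta> = 0" for x y \<eta>
    using compat by (simp add: compat_defect_def)
  then have "P y \<eta> * ?K x = 0" for x y \<eta>
    using compat_defect_smult_right[of x f y \<xi> \<eta>] by simp
  moreover have "linear_form sA ?K"
    by rule (simp_all add: A.mult_add_left A.smult_mult algebra_simps)
  ultimately have "?K x = 0"
    using linear_form_eq_zeroI by blast
  then show ?thesis by simp
qed

lemma mult_diff_eq:
  assumes symmetric: "\<And>z. P (mA z (diff (flipP P) aB f)) \<xi> = P z (mB \<xi> (diff P aA f))"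
  shows "mB \<xi> (diff P aA f) = diff P aA (aB \<xi> f) - contr P (cob1 P mA aA \<xi>) (diff (flipP P) aB f)"
proof (rule pair_right_eqI)
  fix z
  have "linear_form sA (\<lambda>\<beta>. cob1 P mA aA \<xi> \<beta> (diff (flipP P) aB f))"
    by rule (simp_all add: cob1_def A.anchor_add_left A.anchor_smult A.mult_add_left A.smult_mult
        algebra_simps)
  then show "P z (mB \<xi> (diff P aA f))
      = P z (diff P aA (aB \<xi> f) - contr P (cob1 P mA aA \<xi>) (diff (flipP P) aB f))"
    by (simp add: pair_contr pair_diff[OF A.linear_form_anchor] cob1_def pair_diff_flip symmetric)
qed

end

theorem mainTheorem2:
  fixes smA :: "'r::{comm_ring_1,real_algebra_1} \<Rightarrow> 'a::ab_group_add \<Rightarrow> 'a"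
    and smB :: "'r \<Rightarrow> 'b::ab_group_add \<Rightarrow> 'b"
    and P :: "'a \<Rightarrow> 'b \<Rightarrow> 'r"
    and mulA :: "'a \<Rightarrow> 'a \<Rightarrow> 'a" and anA :: "'a \<Rightarrow> 'r \<Rightarrow> 'r"
    and mulB :: "'b \<Rightarrow> 'b \<Rightarrow> 'b" and anB :: "'b \<Rightarrow> 'r \<Rightarrow> 'r"
  assumes "left_symmetric_bialgebroid smA smB P mulA anA mulB anB"
  shows "\<forall>x \<xi> f.
     mulA x (diff (flipP P) anB f) =
       diff (flipP P) anB (anA x f) - contr (flipP P) (cob1 (flipP P) mulB anB x) (diff P anA f)
   \<and> mulB \<xi> (diff P anA f) =
       diff P anA (anB \<xi> f) - contr P (cob1 P mulA anA \<xi>) (diff (flipP P) anB f)"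
proof (intro allI conjI)
  fix x \<xi> f
  have duality: "algebroid_duality smA smB P mulA anA mulB anB"
    using assms unfolding left_symmetric_bialgebroid_def algebroid_duality_def dual_pairing_def ls_algebroid_def
    by blast
  have "P (mulA y (diff (flipP P) anB f)) \<eta> = P y (mulB \<eta> (diff P anA f))" for y \<eta>
    using assms unfolding left_symmetric_bialgebroid_def
    by (blast intro: algebroid_duality.pair_mult_diff_symmetric[OF duality])
  then show "mulA x (diff (flipP P) anB f) =
      diff (flipP P) anB (anA x f) - contr (flipP P) (cob1 (flipP P) mulB anB x) (diff P anA f)"
    and "mulB \<xi> (diff P anA f) =
      diff P anA (anB \<xi> f) - contr P (cob1 P mulA anA \<xi>) (diff (flipP P) anB f)"
    using algebroid_duality.mult_diff_eq[OF algebroid_duality_flip[OF duality], where f = f and \<xi> = x]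
      algebroid_duality.mult_diff_eq[OF duality, where f = f and \<xi> = \<xi>]
    by simp_all
qed

end
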